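(* Let $d\ge 4$ and let $G=\mathrm{GL}_d(2)$ act naturally on the set of $2$-dimensional subspaces of $\mathbb{F}_2^d$. Then $G$ is not $\mathrm{IBIS}$.
   Context: A base of a permutation group $G$ on $\Omega$ is a sequence $(\omega_1,\dots,\omega_\ell)$ of points with trivial pointwise stabilizer; it is irredundant if $G>G_{\omega_1}>\cdots>G_{\omega_1,\dots,\omega_\ell}=1$. $G$ is $\mathrm{IBIS}$ if all irredundant bases of $G$ have the same cardinality. *)

theory Defs
  imports "HOL-Analysis.Analysis" "HOL-Library.Z2"
begin

text \<open>The permutation group is the image of G in Sym(\<Omega>); an element of it is trivial
  iff the corresponding group element fixes every point of \<Omega>.  Hence the pointwise
  stabiliser of a set S in the permutation group is trivial iff the preimage
  pstab G act S equals pstab G act \<Omega> (the kernel), and strict inclusions of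
  stabilisers in the permutation group correspond to strict inclusions of preimages.\<close>

definition pstab :: "'g set \<Rightarrow> ('g \<Rightarrow> 'x \<Rightarrow> 'x) \<Rightarrow> 'x set \<Rightarrow> 'g set" where
  "pstab G act S = {g \<in> G. \<forall>x\<in>S. act g x = x}"

definition is_base :: "'g set \<Rightarrow> ('g \<Rightarrow> 'x \<Rightarrow> 'x) \<Rightarrow> 'x set \<Rightarrow> 'x list \<Rightarrow> bool" where
  "is_base G act \<Omega> b \<longleftrightarrow> set b \<subseteq> \<Omega> \<and> pstab G act (set b) = pstab G act \<Omega>"

definition irredundant_base :: "'g set \<Rightarrow> ('g \<Rightarrow> 'x \<Rightarrow> 'x) \<Rightarrow> 'x set \<Rightarrow> 'x list \<Rightarrow> bool" where
  "irredundant_base G act \<Omega> b \<longleftrightarrow> is_base G act \<Omega> b \<and>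
     (\<forall>i < length b. pstab G act (set (take (Suc i) b)) \<subset> pstab G act (set (take i b)))"

definition IBIS :: "'g set \<Rightarrow> ('g \<Rightarrow> 'x \<Rightarrow> 'x) \<Rightarrow> 'x set \<Rightarrow> bool" where
  "IBIS G act \<Omega> \<longleftrightarrow> (\<forall>b1 b2. irredundant_base G act \<Omega> b1 \<longrightarrow> irredundant_base G act \<Omega> b2
                         \<longrightarrow> length b1 = length b2)"

text \<open>GL_d(2) as invertible d x d matrices over the field bit = F_2, with d = CARD('n),
  acting naturally on the set of 2-dimensional subspaces of F_2^d.\<close>

definition GL2 :: "(bit ^ 'n ^ 'n) set" where
  "GL2 = {A. invertible A}"

definition subspaces2 :: "(bit ^ 'n) set set" where
  "subspaces2 = {W. vec.subspace W \<and> vec.dim W = 2}"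

definition mat_act :: "bit ^ 'n ^ 'n \<Rightarrow> (bit ^ 'n) set \<Rightarrow> (bit ^ 'n) set" where
  "mat_act A W = (\<lambda>v. A *v v) ` W"

end

theory Submission
  imports Defs
begin

(* Write <e_u, e_v> for the coordinate plane spanned by two standard basis vectors.
   Along a cyclic ordering x_1, ..., x_d of the coordinates, the d planes <e_x_i, e_x_(i+1)>
   form a base: a matrix fixing the two planes through e_k fixes the line they meet in, and
   over F_2 this means it fixes e_k.  On the other hand, for distinct coordinates a, b the
   sequence <e_a, e_b>, then <e_a, e_j>, <e_b, e_j> for each of the other d - 2 coordinates j,
   is irredundant of length 2d - 3: the transvections e_j |-> e_j + e_a + e_b and
   e_j |-> e_j + e_a fix every earlier plane but move the next one.  Completing this sequence
   with the cyclic base and thinning out the cyclic base alone yield irredundant bases of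
   lengths at least 2d - 3 and at most d, which differ once d >= 4. *)

definition irredundant :: "'g set \<Rightarrow> ('g \<Rightarrow> 'x \<Rightarrow> 'x) \<Rightarrow> 'x list \<Rightarrow> bool" where
  "irredundant G act b \<longleftrightarrow>
     (\<forall>i < length b. pstab G act (set (take (Suc i) b)) \<subset> pstab G act (set (take i b)))"

lemma irredundant_base_iff:
  "irredundant_base G act \<Omega> b \<longleftrightarrow> is_base G act \<Omega> b \<and> irredundant G act b"
  by (simp add: irredundant_base_def irredundant_def)

lemma pstab_Un: "pstab G act (A \<union> B) = pstab G act A \<inter> pstab G act B"
  unfolding pstab_def by auto

lemma pstab_antimono: "A \<subseteq> B \<Longrightarrow> pstab G act B \<subseteq> pstab G act A"
  unfolding pstab_def by auto

lemma irredundant_Nil [simp]: "irredundant G act []"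
  by (simp add: irredundant_def)

lemma irredundant_snoc:
  assumes "irredundant G act p" "g \<in> pstab G act (set p)" "act g x \<noteq> x"
  shows "irredundant G act (p @ [x])"
  unfolding irredundant_def
proof (intro allI impI)
  fix i assume "i < length (p @ [x])"
  then consider "Suc i \<le> length p" | "i = length p" by fastforce
  then show "pstab G act (set (take (Suc i) (p @ [x]))) \<subset> pstab G act (set (take i (p @ [x])))"
  proof cases
    case 1
    then show ?thesis using assms(1) by (simp add: irredundant_def)
  next
    case 2
    have "g \<notin> pstab G act (insert x (set p))" using assms(3) by (simp add: pstab_def)
    then show ?thesis
      using 2 assms(2) pstab_antimono[of "set p" "insert x (set p)" G act] by auto
  qed
qed

lemma irredundant_extend_to_base:
  assumes "irredundant G act p" "set p \<subseteq> \<Omega>" "set q \<subseteq> \<Omega>"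
    and "pstab G act (set p \<union> set q) = pstab G act \<Omega>"
  shows "\<exists>b. irredundant_base G act \<Omega> b \<and> length p \<le> length b \<and> length b \<le> length p + length q"
  using assms
proof (induction q arbitrary: p)
  case Nil
  then show ?case by (auto simp: irredundant_base_iff is_base_def)
next
  case (Cons x q)
  show ?case
  proof (cases "pstab G act (insert x (set p)) = pstab G act (set p)")
    case True
    then have "pstab G act (set p \<union> set q) = pstab G act \<Omega>"
      using Cons.prems(4) by (metis Un_insert_left Un_insert_right list.simps(15) pstab_Un)
    with Cons.IH[of p] Cons.prems show ?thesis by fastforce
  next
    case False
    then obtain g where "g \<in> pstab G act (set p)" "act g x \<noteq> x"
      using pstab_antimono[of "set p" "insert x (set p)" G act] by (auto simp: pstab_def)
    with Cons.prems(1) have "irredundant G act (p @ [x])" by (rule irredundant_snoc)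
    with Cons.IH[of "p @ [x]"] Cons.prems show ?thesis by fastforce
  qed
qed

lemma not_IBIS_if_short_base:
  assumes "is_base G act \<Omega> q" "irredundant G act p" "set p \<subseteq> \<Omega>" "length q < length p"
  shows "\<not> IBIS G act \<Omega>"
proof
  assume ibis: "IBIS G act \<Omega>"
  have q: "set q \<subseteq> \<Omega>" "pstab G act (set q) = pstab G act \<Omega>"
    using assms(1) by (auto simp: is_base_def)
  have "pstab G act (set p \<union> set q) = pstab G act \<Omega>"
    using q pstab_antimono[OF assms(3), of G act] by (auto simp: pstab_Un)
  then obtain b1 where b1: "irredundant_base G act \<Omega> b1" "length p \<le> length b1"
    using irredundant_extend_to_base[OF assms(2,3) q(1)] by blast
  obtain b2 where b2: "irredundant_base G act \<Omega> b2" "length b2 \<le> length q"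
    using irredundant_extend_to_base[of G act "[]" \<Omega> q] q by auto
  have "length b1 = length b2" using ibis b1(1) b2(1) unfolding IBIS_def by blast
  with b1(2) b2(2) assms(4) show False by linarith
qed

definition coord_plane :: "'n::finite \<Rightarrow> 'n \<Rightarrow> (bit ^ 'n) set" where
  "coord_plane u v = vec.span {axis u 1, axis v 1}"

lemma coord_plane_commute: "coord_plane u v = coord_plane v u"
  by (simp add: coord_plane_def insert_commute)

lemma axis_in_coord_plane: "axis u 1 \<in> coord_plane u v" "axis v 1 \<in> coord_plane u v"
  unfolding coord_plane_def by (auto intro: vec.span_base)

lemma coord_plane_in_subspaces2:
  fixes u v :: "'n::finite"
  assumes "u \<noteq> v" shows "coord_plane u v \<in> subspaces2"
proof -
  have "vec.independent {axis u 1, axis v 1 :: bit ^ 'n}"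
    by (rule vec.independent_mono[OF independent_cart_basis]) (auto simp: cart_basis_def)
  moreover have "card {axis u 1, axis v 1 :: bit ^ 'n} = 2"
    using assms by (simp add: axis_eq_axis)
  ultimately show ?thesis
    by (simp add: subspaces2_def coord_plane_def vec.dim_eq_card_independent)
qed

lemma coord_plane_nth_eq_0:
  fixes u v i :: "'n::finite"
  assumes "x \<in> coord_plane u v" "i \<noteq> u" "i \<noteq> v"
  shows "x $ i = 0"
proof -
  have "vec.subspace {x :: bit ^ 'n. x $ i = 0}"
    by (auto simp: vec.subspace_def)
  then have "coord_plane u v \<subseteq> {x. x $ i = 0}"
    unfolding coord_plane_def using assms(2,3) by (intro vec.span_minimal) (auto simp: axis_def)
  then show ?thesis using assms(1) by auto
qed

lemma mat_act_span: "mat_act A (vec.span X) = vec.span ((*v) A ` X)"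
  unfolding mat_act_def by (simp add: vec.span_image)

lemma mat_act_coord_plane:
  "mat_act A (coord_plane u v) = vec.span {A *v axis u 1, A *v axis v 1}"
  by (simp add: coord_plane_def mat_act_span)

lemma mat_act_coord_plane_moved:
  assumes "(A *v axis u 1) $ i \<noteq> 0" "i \<noteq> u" "i \<noteq> v"
  shows "mat_act A (coord_plane u v) \<noteq> coord_plane u v"
proof
  assume "mat_act A (coord_plane u v) = coord_plane u v"
  then have "A *v axis u 1 \<in> coord_plane u v"
    using axis_in_coord_plane(1) unfolding mat_act_def by blast
  with assms show False using coord_plane_nth_eq_0 by blast
qed

lemma span_pair_add: "vec.span {x, y + x} = vec.span {x, y :: 'a::field ^ 'n}"
proof -
  have "y + x \<in> vec.span {x, y}"
    by (intro vec.span_add vec.span_base) auto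
  have "(y + x) - x \<in> vec.span {x, y + x}"
    by (intro vec.span_diff vec.span_base) auto
  then have "vec.span {x, y + x} = vec.span {y, x, y + x}"
    by (simp add: vec.span_redundant)
  also have "\<dots> = vec.span {y + x, x, y}"
    by (rule arg_cong[where f = vec.span]) blast
  also have "\<dots> = vec.span {x, y}"
    using \<open>y + x \<in> vec.span {x, y}\<close> by (rule vec.span_redundant)
  finally show ?thesis .
qed

definition transvection :: "'n::finite \<Rightarrow> bit ^ 'n \<Rightarrow> bit ^ 'n ^ 'n" where
  "transvection j w = mat 1 + (\<chi> i k. if k = j then w $ i else 0)"

lemma transvection_mult: "transvection j w *v v = v + v $ j *s w"
proof -
  have "(\<chi> i k. if k = j then w $ i else 0) *v v = v $ j *s w"
    by (simp add: vec_eq_iff matrix_vector_mult_def if_distribR mult.commute)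
  then show ?thesis
    by (simp add: transvection_def matrix_vector_mult_add_rdistrib)
qed

lemma transvection_axis_self: "transvection j w *v axis j 1 = axis j 1 + w"
  by (simp add: transvection_mult)

lemma transvection_axis: "i \<noteq> j \<Longrightarrow> transvection j w *v axis i 1 = axis i 1"
  by (simp add: transvection_mult axis_def)

lemma transvection_in_GL2:
  assumes "w $ j = 0" shows "transvection j w \<in> GL2"
proof -
  have "transvection j w *v (transvection j w *v v) = v" for v
    using assms by (simp add: transvection_mult vec_eq_iff algebra_simps)
  then have "transvection j w ** transvection j w = mat 1"
    by (simp add: matrix_eq matrix_vector_mul_assoc[symmetric])
  then show ?thesis
    unfolding GL2_def invertible_left_inverse by blast
qed

lemma transvection_fixes_coord_plane:
  "u \<noteq> j \<Longrightarrow> v \<noteq> j \<Longrightarrow> mat_act (transvection j w) (coord_plane u v) = coord_plane u v"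
  unfolding mat_act_coord_plane by (simp add: transvection_axis coord_plane_def)

definition plane_chain :: "'n::finite \<Rightarrow> 'n \<Rightarrow> 'n list \<Rightarrow> (bit ^ 'n) set list" where
  "plane_chain a b js =
     coord_plane a b # concat (map (\<lambda>j. [coord_plane a j, coord_plane b j]) js)"

lemma plane_chain_snoc:
  "plane_chain a b (js @ [j]) = (plane_chain a b js @ [coord_plane a j]) @ [coord_plane b j]"
  by (simp add: plane_chain_def)

lemma length_plane_chain: "length (plane_chain a b js) = 2 * length js + 1"
  by (induction js) (auto simp: plane_chain_def)

lemma plane_chain_subspaces2:
  "distinct (a # b # js) \<Longrightarrow> set (plane_chain a b js) \<subseteq> subspaces2"
  by (auto simp: plane_chain_def intro!: coord_plane_in_subspaces2)

lemma transvection_in_pstab_plane_chain: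
  assumes "w $ j = 0" "j \<notin> set (a # b # js)"
  shows "transvection j w \<in> pstab GL2 mat_act (set (plane_chain a b js))"
proof -
  have "mat_act (transvection j w) W = W" if W: "W \<in> set (plane_chain a b js)" for W
  proof -
    obtain u v where "W = coord_plane u v" "u \<noteq> j" "v \<noteq> j"
      using W assms(2) by (auto simp: plane_chain_def)
    then show ?thesis by (simp add: transvection_fixes_coord_plane)
  qed
  then show ?thesis using assms(1) by (simp add: pstab_def transvection_in_GL2)
qed

lemma irredundant_plane_chain_snoc:
  assumes "irredundant GL2 mat_act (plane_chain a b js)" "distinct (a # b # js @ [j])"
  shows "irredundant GL2 mat_act (plane_chain a b (js @ [j]))"
proof -
  let ?p = "plane_chain a b js"
  have j: "a \<noteq> j" "b \<noteq> j" "j \<notin> set js" "a \<noteq> b" using assms(2) by auto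
  define g1 where "g1 = transvection j (axis a 1 + axis b 1)"
  have "g1 \<in> pstab GL2 mat_act (set ?p)"
    using j unfolding g1_def by (intro transvection_in_pstab_plane_chain) (auto simp: axis_def)
  moreover have "mat_act g1 (coord_plane a j) \<noteq> coord_plane a j"
    unfolding coord_plane_commute[of a j] using j
    by (intro mat_act_coord_plane_moved[where i = b]) (auto simp: g1_def transvection_mult axis_def)
  ultimately have chain1: "irredundant GL2 mat_act (?p @ [coord_plane a j])"
    by (rule irredundant_snoc[OF assms(1)])
  define g2 where "g2 = transvection j (axis a 1)"
  have "mat_act g2 (coord_plane a j) = vec.span {axis a 1, axis j 1 + axis a 1}"
    using j by (simp add: g2_def mat_act_coord_plane transvection_axis transvection_axis_self)
  also have "\<dots> = coord_plane a j"
    by (simp add: coord_plane_def span_pair_add)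
  finally have "mat_act g2 (coord_plane a j) = coord_plane a j" .
  moreover have "g2 \<in> pstab GL2 mat_act (set ?p)"
    using j unfolding g2_def by (intro transvection_in_pstab_plane_chain) (auto simp: axis_def)
  ultimately have "g2 \<in> pstab GL2 mat_act (set (?p @ [coord_plane a j]))"
    by (simp add: pstab_def)
  moreover have "mat_act g2 (coord_plane b j) \<noteq> coord_plane b j"
    unfolding coord_plane_commute[of b j] using j
    by (intro mat_act_coord_plane_moved[where i = a]) (auto simp: g2_def transvection_mult axis_def)
  ultimately show ?thesis
    unfolding plane_chain_snoc by (rule irredundant_snoc[OF chain1])
qed

lemma irredundant_plane_chain:
  assumes "distinct (a # b # js)" "c \<noteq> a" "c \<noteq> b"
  shows "irredundant GL2 mat_act (plane_chain a b js)"
  using assms(1)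
proof (induction js rule: rev_induct)
  case Nil
  have "transvection a (axis c 1) \<in> pstab GL2 mat_act (set [])"
    using assms(2) by (simp add: pstab_def axis_def transvection_in_GL2)
  moreover have "mat_act (transvection a (axis c 1)) (coord_plane a b) \<noteq> coord_plane a b"
    using assms(2,3) by (intro mat_act_coord_plane_moved[where i = c])
      (simp_all add: transvection_mult axis_def)
  ultimately show ?case
    using irredundant_snoc[OF irredundant_Nil] by (simp add: plane_chain_def)
next
  case (snoc j js)
  then show ?case by (simp add: irredundant_plane_chain_snoc)
qed

lemma matrix_vector_mult_axis_nth: "((A::'a::semiring_1^'n^'m) *v axis k 1) $ i = A $ i $ k"
  by (simp add: matrix_vector_mult_def axis_def if_distrib if_distribR cong: if_cong)

lemma eq_mat_1_if_fixes_axes: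
  fixes A :: "'a::semiring_1 ^ 'n ^ 'n"
  assumes "\<And>k. A *v axis k 1 = axis k 1"
  shows "A = mat 1"
proof -
  have "A $ i $ k = mat 1 $ i $ k" for i k
  proof -
    have "A $ i $ k = (A *v axis k 1) $ i" by (simp only: matrix_vector_mult_axis_nth)
    also have "\<dots> = mat 1 $ i $ k" by (simp add: assms) (simp add: axis_def mat_def)
    finally show ?thesis .
  qed
  then show ?thesis by (simp add: vec_eq_iff)
qed

lemma mat_1_in_pstab: "mat 1 \<in> pstab GL2 mat_act X"
  by (auto simp: pstab_def GL2_def mat_act_def invertible_left_inverse)

lemma GL2_fixes_axis:
  fixes k u v :: "'n::finite"
  assumes "A \<in> GL2" "mat_act A (coord_plane k u) = coord_plane k u"
    and "mat_act A (coord_plane k v) = coord_plane k v" "u \<noteq> k" "v \<noteq> k" "u \<noteq> v"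
  shows "A *v axis k 1 = axis k 1"
proof -
  have "A *v axis k 1 \<in> coord_plane k u" "A *v axis k 1 \<in> coord_plane k v"
    using assms(2,3) axis_in_coord_plane(1) unfolding mat_act_def by blast+
  then have off: "(A *v axis k 1) $ i = 0" if "i \<noteq> k" for i
    using that assms(6) coord_plane_nth_eq_0 by metis
  have "inj ((*v) A)"
    using assms(1) by (simp add: GL2_def invertible_left_inverse matrix_left_invertible_injective)
  then have "A *v axis k 1 \<noteq> 0"
    by (metis axis_eq_0_iff injD matrix_vector_mult_0_right zero_neq_one)
  then have "(A *v axis k 1) $ k \<noteq> 0"
    using off by (metis vec_eq_iff zero_index)
  then have "(A *v axis k 1) $ i = axis k 1 $ i" for i
    using off by (cases "i = k") (simp_all add: axis_def)
  then show ?thesis by (simp add: vec_eq_iff)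
qed

definition cycle_planes :: "'n::finite list \<Rightarrow> (bit ^ 'n) set list" where
  "cycle_planes xs = map (\<lambda>i. coord_plane (xs ! i) (xs ! (Suc i mod length xs))) [0..<length xs]"

lemma cycle_planes_subspaces2:
  assumes "distinct xs" "2 \<le> length xs"
  shows "set (cycle_planes xs) \<subseteq> subspaces2"
proof -
  have "xs ! i \<noteq> xs ! (Suc i mod length xs)" if "i < length xs" for i
  proof -
    have "Suc i mod length xs < length xs" "Suc i mod length xs \<noteq> i"
      using assms(2) that by (auto simp: mod_Suc)
    with assms(1) that show ?thesis by (simp add: nth_eq_iff_index_eq)
  qed
  then show ?thesis by (auto simp: cycle_planes_def intro!: coord_plane_in_subspaces2)
qed

lemma cycle_planes_neighbours:
  assumes "i < length xs" "3 \<le> length xs"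
  obtains n p where "coord_plane (xs ! i) (xs ! n) \<in> set (cycle_planes xs)"
    and "coord_plane (xs ! i) (xs ! p) \<in> set (cycle_planes xs)"
    and "n < length xs" "p < length xs" "n \<noteq> i" "p \<noteq> i" "n \<noteq> p"
proof -
  let ?d = "length xs"
  define n where "n = Suc i mod ?d"
  define p where "p = (if i = 0 then ?d - 1 else i - 1)"
  have indices: "n < ?d" "p < ?d" "n \<noteq> i" "p \<noteq> i" "n \<noteq> p"
    using assms by (auto simp: n_def p_def mod_Suc)
  have "coord_plane (xs ! i) (xs ! n) \<in> set (cycle_planes xs)"
    unfolding cycle_planes_def n_def using assms(1) by (auto intro!: image_eqI[where x = i])
  moreover have "Suc p mod ?d = i"
    using assms by (auto simp: p_def mod_Suc)
  then have "coord_plane (xs ! p) (xs ! i) \<in> set (cycle_planes xs)"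
    unfolding cycle_planes_def using indices(2) by (auto intro!: image_eqI[where x = p])
  then have "coord_plane (xs ! i) (xs ! p) \<in> set (cycle_planes xs)"
    by (simp add: coord_plane_commute)
  ultimately show ?thesis using that indices by blast
qed

lemma cycle_planes_is_base:
  assumes "distinct xs" "set xs = UNIV" "3 \<le> length xs"
  shows "is_base GL2 mat_act subspaces2 (cycle_planes xs)"
proof -
  have trivial: "pstab GL2 mat_act (set (cycle_planes xs)) \<subseteq> {mat 1}"
  proof
    fix A assume A: "A \<in> pstab GL2 mat_act (set (cycle_planes xs))"
    have "A *v axis k 1 = axis k 1" for k
    proof -
      obtain i where i: "i < length xs" "xs ! i = k"
        using assms(2) by (metis UNIV_I in_set_conv_nth)
      obtain n p where "coord_plane k (xs ! n) \<in> set (cycle_planes xs)"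
        "coord_plane k (xs ! p) \<in> set (cycle_planes xs)"
        "n < length xs" "p < length xs" "n \<noteq> i" "p \<noteq> i" "n \<noteq> p"
        using cycle_planes_neighbours[OF i(1) assms(3)] unfolding i(2) by blast
      with A i assms(1) show ?thesis
        by (intro GL2_fixes_axis[of A k "xs ! n" "xs ! p"]) (auto simp: pstab_def nth_eq_iff_index_eq)
    qed
    then show "A \<in> {mat 1}" by (simp add: eq_mat_1_if_fixes_axes)
  qed
  have planes: "set (cycle_planes xs) \<subseteq> subspaces2"
    using assms by (intro cycle_planes_subspaces2) auto
  then have "pstab GL2 mat_act subspaces2 \<subseteq> pstab GL2 mat_act (set (cycle_planes xs))"
    by (rule pstab_antimono)
  with trivial planes mat_1_in_pstab[of subspaces2] show ?thesis
    unfolding is_base_def by blast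
qed

theorem lemma3p3:
  assumes "CARD('n::finite) \<ge> 4"
  shows "\<not> IBIS (GL2 :: (bit ^ 'n ^ 'n) set) mat_act subspaces2"
proof -
  obtain xs :: "'n list" where xs: "distinct xs" "set xs = UNIV"
    using finite_distinct_list[of "UNIV :: 'n set"] by auto
  have len: "length xs = CARD('n)"
    using xs distinct_card by fastforce
  with assms have "Suc (Suc (Suc (Suc 0))) \<le> length xs" by simp
  then obtain a b c js where xs_eq: "xs = a # b # c # js"
    by (auto simp: Suc_le_length_iff)
  show ?thesis
  proof (rule not_IBIS_if_short_base)
    show "is_base GL2 mat_act subspaces2 (cycle_planes xs)"
      using xs by (rule cycle_planes_is_base) (simp add: xs_eq)
    show "irredundant GL2 mat_act (plane_chain a b (c # js))"
      using xs(1) unfolding xs_eq by (intro irredundant_plane_chain[where c = c]) auto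
    show "set (plane_chain a b (c # js)) \<subseteq> subspaces2"
      using xs(1) unfolding xs_eq by (intro plane_chain_subspaces2) auto
    show "length (cycle_planes xs) < length (plane_chain a b (c # js))"
      using len assms by (simp add: cycle_planes_def length_plane_chain xs_eq)
  qed
qed

end
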